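(* Let $(f_n):\underline G=(G_n,p_n)\to\underline H=(H_n,q_n)$ be a level morphism of inverse sequences of groups such that the induced map $\tilde f:\varprojlim\underline G\to\varprojlim\underline H$, $\tilde f((g_n))=(f_n(g_n))$, is an isomorphism of groups. If $\tilde f$ is open (with respect to the inverse limit topologies, each $G_n$, $H_n$ discrete) and $\underline G$ is Mittag-Leffler, then the morphism $\underline f:\underline G\to\underline H$ of \textbf{Tower-Grp} determined by $(f_n)$ is a monomorphism in \textbf{Tower-Grp}.
   Context: A level morphism $(f_n)$ consists of homomorphisms $f_n:G_n\to H_n$ with $f_n\circ p_n=q_n\circ f_{n+1}$ for all $n$ (i.e. $\Phi=\mathrm{id}$). $p_{nm}=p_n\circ\cdots\circ p_{m-1}$; Mittag-Leffler: for every $n_0$ there is $n_1>n_0$ with $p_{n_0n}(G_n)=p_{n_0n_1}(G_{n_1})$ for all $n>n_1$. \textbf{Tower-Grp}: objects inverse sequences of groups; morphisms $(f_n,\Phi)$ with $\Phi:\mathbb{N}\to\mathbb{N}$, homomorphisms $f_n:G_{\Phi(n)}\to H_n$ such that for all $n'>n$ there is $m\ge\Phi(n),\Phi(n')$ with $f_n\circ p_{\Phi(n)m}=q_{nn'}\circ f_{n'}\circ p_{\Phi(n')m}$, modulo the relation: $(f_n,\Phi)\sim(g_n,\Psi)$ if every $n$ admits $m\ge\Phi(n),\Psi(n)$ with $f_n\circ p_{\Phi(n)m}=g_n\circ p_{\Psi(n)m}$. A monomorphism is a morphism $u$ with $u\circ a=u\circ b\Rightarrow a=b$. *)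

theory Defs
  imports "HOL-Analysis.Analysis" "HOL-Algebra.Group"
begin

definition is_tower :: "(nat \<Rightarrow> ('a, 'm) monoid_scheme) \<Rightarrow> (nat \<Rightarrow> 'a \<Rightarrow> 'a) \<Rightarrow> bool" where
  "is_tower G p \<longleftrightarrow> (\<forall>n. group (G n) \<and> p n \<in> hom (G (Suc n)) (G n))"

fun tower_map :: "(nat \<Rightarrow> 'a \<Rightarrow> 'a) \<Rightarrow> nat \<Rightarrow> nat \<Rightarrow> 'a \<Rightarrow> 'a" where
  "tower_map p n 0 = id"
| "tower_map p n (Suc k) = tower_map p n k \<circ> p (n + k)"

definition bond :: "(nat \<Rightarrow> 'a \<Rightarrow> 'a) \<Rightarrow> nat \<Rightarrow> nat \<Rightarrow> 'a \<Rightarrow> 'a" where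
  "bond p n m = tower_map p n (m - n)"

definition level_morphism ::
  "(nat \<Rightarrow> ('a, 'm) monoid_scheme) \<Rightarrow> (nat \<Rightarrow> 'a \<Rightarrow> 'a) \<Rightarrow>
   (nat \<Rightarrow> ('b, 'n) monoid_scheme) \<Rightarrow> (nat \<Rightarrow> 'b \<Rightarrow> 'b) \<Rightarrow> (nat \<Rightarrow> 'a \<Rightarrow> 'b) \<Rightarrow> bool" where
  "level_morphism G p H q f \<longleftrightarrow>
     (\<forall>n. f n \<in> hom (G n) (H n) \<and>
          (\<forall>x \<in> carrier (G (Suc n)). f n (p n x) = q n (f (Suc n) x)))"

text \<open>Morphism (f_n, Phi) of Tower-Grp (a representative).\<close>
definition tower_morph ::
  "(nat \<Rightarrow> ('a, 'm) monoid_scheme) \<Rightarrow> (nat \<Rightarrow> 'a \<Rightarrow> 'a) \<Rightarrow>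
   (nat \<Rightarrow> ('b, 'n) monoid_scheme) \<Rightarrow> (nat \<Rightarrow> 'b \<Rightarrow> 'b) \<Rightarrow>
   (nat \<Rightarrow> 'a \<Rightarrow> 'b) \<Rightarrow> (nat \<Rightarrow> nat) \<Rightarrow> bool" where
  "tower_morph G p H q f \<Phi> \<longleftrightarrow>
     (\<forall>n. f n \<in> hom (G (\<Phi> n)) (H n)) \<and>
     (\<forall>n n'. n < n' \<longrightarrow> (\<exists>m. \<Phi> n \<le> m \<and> \<Phi> n' \<le> m \<and>
        (\<forall>x \<in> carrier (G m).
           f n (bond p (\<Phi> n) m x) = bond q n n' (f n' (bond p (\<Phi> n') m x)))))"

definition tower_eq ::
  "(nat \<Rightarrow> ('a, 'm) monoid_scheme) \<Rightarrow> (nat \<Rightarrow> 'a \<Rightarrow> 'a) \<Rightarrow>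
   (nat \<Rightarrow> 'a \<Rightarrow> 'b) \<Rightarrow> (nat \<Rightarrow> nat) \<Rightarrow> (nat \<Rightarrow> 'a \<Rightarrow> 'b) \<Rightarrow> (nat \<Rightarrow> nat) \<Rightarrow> bool" where
  "tower_eq G p f \<Phi> g \<Psi> \<longleftrightarrow>
     (\<forall>n. \<exists>m. \<Phi> n \<le> m \<and> \<Psi> n \<le> m \<and>
        (\<forall>x \<in> carrier (G m). f n (bond p (\<Phi> n) m x) = g n (bond p (\<Psi> n) m x)))"

definition tower_comp_maps :: "(nat \<Rightarrow> 'b \<Rightarrow> 'c) \<Rightarrow> (nat \<Rightarrow> nat) \<Rightarrow> (nat \<Rightarrow> 'a \<Rightarrow> 'b) \<Rightarrow> nat \<Rightarrow> 'a \<Rightarrow> 'c" where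
  "tower_comp_maps f \<Phi> a = (\<lambda>n. f n \<circ> a (\<Phi> n))"

definition tower_comp_index :: "(nat \<Rightarrow> nat) \<Rightarrow> (nat \<Rightarrow> nat) \<Rightarrow> nat \<Rightarrow> nat" where
  "tower_comp_index \<Phi> \<alpha> = \<alpha> \<circ> \<Phi>"

text \<open>(f,Phi) : (G,p) \<rightarrow> (H,q) is a monomorphism in Tower-Grp, tested against
  all towers whose groups have elements in the type 'c (the theorem quantifies
  over the type 'c, hence over all test towers).\<close>
definition tower_mono ::
  "'c itself \<Rightarrow> (nat \<Rightarrow> ('a, 'm) monoid_scheme) \<Rightarrow> (nat \<Rightarrow> 'a \<Rightarrow> 'a) \<Rightarrow>
   (nat \<Rightarrow> ('b, 'n) monoid_scheme) \<Rightarrow> (nat \<Rightarrow> 'b \<Rightarrow> 'b) \<Rightarrow>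
   (nat \<Rightarrow> 'a \<Rightarrow> 'b) \<Rightarrow> (nat \<Rightarrow> nat) \<Rightarrow> bool" where
  "tower_mono (_ :: 'c itself) G p H q f \<Phi> \<longleftrightarrow>
     (\<forall>(A :: nat \<Rightarrow> 'c monoid) r a \<alpha> b \<beta>.
        is_tower A r \<longrightarrow> tower_morph A r G p a \<alpha> \<longrightarrow> tower_morph A r G p b \<beta> \<longrightarrow>
        tower_eq A r (tower_comp_maps f \<Phi> a) (tower_comp_index \<Phi> \<alpha>)
                     (tower_comp_maps f \<Phi> b) (tower_comp_index \<Phi> \<beta>) \<longrightarrow>
        tower_eq A r a \<alpha> b \<beta>)"

definition mittag_leffler :: "(nat \<Rightarrow> ('a, 'm) monoid_scheme) \<Rightarrow> (nat \<Rightarrow> 'a \<Rightarrow> 'a) \<Rightarrow> bool" where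
  "mittag_leffler G p \<longleftrightarrow>
     (\<forall>n0. \<exists>n1>n0. \<forall>n>n1. bond p n0 n ` carrier (G n) = bond p n0 n1 ` carrier (G n1))"

definition inv_lim_carrier :: "(nat \<Rightarrow> ('a, 'm) monoid_scheme) \<Rightarrow> (nat \<Rightarrow> 'a \<Rightarrow> 'a) \<Rightarrow> (nat \<Rightarrow> 'a) set" where
  "inv_lim_carrier G p = {g. (\<forall>n. g n \<in> carrier (G n)) \<and> (\<forall>n. p n (g (Suc n)) = g n)}"

definition inv_lim :: "(nat \<Rightarrow> ('a, 'm) monoid_scheme) \<Rightarrow> (nat \<Rightarrow> 'a \<Rightarrow> 'a) \<Rightarrow> (nat \<Rightarrow> 'a) monoid" where
  "inv_lim G p = \<lparr>carrier = inv_lim_carrier G p,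
                  mult = (\<lambda>g h n. g n \<otimes>\<^bsub>G n\<^esub> h n),
                  one = (\<lambda>n. \<one>\<^bsub>G n\<^esub>)\<rparr>"

definition inv_lim_topology :: "(nat \<Rightarrow> ('a, 'm) monoid_scheme) \<Rightarrow> (nat \<Rightarrow> 'a \<Rightarrow> 'a) \<Rightarrow> (nat \<Rightarrow> 'a) topology" where
  "inv_lim_topology G p =
     subtopology (product_topology (\<lambda>n. discrete_topology (carrier (G n))) UNIV) (inv_lim_carrier G p)"

definition induced_map :: "(nat \<Rightarrow> 'a \<Rightarrow> 'b) \<Rightarrow> (nat \<Rightarrow> 'a) \<Rightarrow> (nat \<Rightarrow> 'b)" where
  "induced_map f g = (\<lambda>n. f n (g n))"

end

theory Submission
  imports Defs
begin

text \<open>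
  Fix a level n. The threads g with g n = 1 form an open neighbourhood of 1 in the inverse limit;
  since the induced map is open, its image contains all threads of H that are trivial up to some
  level, and injectivity then yields k \<ge> n such that f k (g k) = 1 forces g n = 1 for every
  thread g of G. The Mittag-Leffler condition gives k' \<ge> k such that every element of
  p_kk'(G k') lies on a thread. If f \<circ> a and f \<circ> b agree and u, v are representatives of a and b
  at level k', then p_kk'(u\<inverse>v) lies on a thread killed by f k, so p_nk'(u) = p_nk'(v): a and b
  agree at level n.
\<close>

lemma tower_map_add: "tower_map p n (i + j) = tower_map p n i \<circ> tower_map p (n + i) j"
  by (induction j) (simp_all add: o_assoc add.assoc)

lemma bond_refl [simp]: "bond p n n = id"
  by (simp add: bond_def)

lemma bond_Suc [simp]: "bond p n (Suc n) = p n"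
  by (simp add: bond_def)

lemma bond_bond: "i \<le> j \<Longrightarrow> j \<le> k \<Longrightarrow> bond p i j (bond p j k x) = bond p i k x"
  using tower_map_add[of p i "j - i" "k - j"] by (simp add: bond_def)

lemma bond_hom: "is_tower G p \<Longrightarrow> i \<le> j \<Longrightarrow> bond p i j \<in> hom (G j) (G i)"
proof (induction j)
  case (Suc j)
  show ?case
  proof (cases "i = Suc j")
    case False
    then have "i \<le> j" using Suc.prems by simp
    then have "bond p i (Suc j) = bond p i j \<circ> p j"
      using bond_bond[of i j "Suc j" p] by fastforce
    moreover have "p j \<in> hom (G (Suc j)) (G j)"
      using Suc.prems by (simp add: is_tower_def)
    ultimately show ?thesis
      using Suc.IH[OF Suc.prems(1) \<open>i \<le> j\<close>] hom_compose by metis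
  qed (auto intro: homI)
qed (auto intro: homI)

lemma bond_closed: "is_tower G p \<Longrightarrow> i \<le> j \<Longrightarrow> x \<in> carrier (G j) \<Longrightarrow> bond p i j x \<in> carrier (G i)"
  by (metis bond_hom hom_in_carrier)

lemma bond_thread: "g \<in> inv_lim_carrier G p \<Longrightarrow> i \<le> j \<Longrightarrow> bond p i j (g j) = g i"
proof (induction j)
  case (Suc j)
  show ?case
  proof (cases "i = Suc j")
    case False
    then have "bond p i (Suc j) (g (Suc j)) = bond p i j (p j (g (Suc j)))"
      using Suc.prems bond_bond[of i j "Suc j" p] by simp
    also have "\<dots> = g i"
      using Suc False by (simp add: inv_lim_carrier_def)
    finally show ?thesis .
  qed simp
qed simp

lemma one_in_inv_lim_carrier:
  assumes "is_tower G p"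
  shows "(\<lambda>n. \<one>\<^bsub>G n\<^esub>) \<in> inv_lim_carrier G p"
proof -
  have "group (G n)" "p n \<in> hom (G (Suc n)) (G n)" for n
    using assms by (simp_all add: is_tower_def)
  then show ?thesis
    unfolding inv_lim_carrier_def by (simp add: hom_one group.is_monoid)
qed

lemma induced_map_thread:
  assumes f: "level_morphism G p H q f" and g: "g \<in> inv_lim_carrier G p"
  shows "induced_map f g \<in> inv_lim_carrier H q"
proof -
  have f_hom: "f n \<in> hom (G n) (H n)"
    and f_comm: "\<forall>x \<in> carrier (G (Suc n)). f n (p n x) = q n (f (Suc n) x)" for n
    using f by (simp_all add: level_morphism_def)
  have g_carrier: "g n \<in> carrier (G n)" and g_comm: "p n (g (Suc n)) = g n" for n
    using g by (simp_all add: inv_lim_carrier_def)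
  have "f n (g n) \<in> carrier (H n)" for n
    using hom_in_carrier[OF f_hom g_carrier] .
  moreover have "q n (f (Suc n) (g (Suc n))) = f n (g n)" for n
    using f_comm[of n] g_carrier[of "Suc n"] by (simp flip: g_comm[of n])
  ultimately show ?thesis
    unfolding inv_lim_carrier_def induced_map_def by simp
qed

lemma induced_map_one:
  assumes "is_tower G p" "is_tower H q" "level_morphism G p H q f"
  shows "induced_map f (\<lambda>n. \<one>\<^bsub>G n\<^esub>) = (\<lambda>n. \<one>\<^bsub>H n\<^esub>)"
proof -
  have "f n \<one>\<^bsub>G n\<^esub> = \<one>\<^bsub>H n\<^esub>" for n
  proof -
    have "f n \<in> hom (G n) (H n)" "group (G n)" "group (H n)"
      using assms by (simp_all add: level_morphism_def is_tower_def)
    then show ?thesis by (rule hom_one)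
  qed
  then show ?thesis
    by (simp add: induced_map_def)
qed

lemma thread_one_below:
  assumes "is_tower H q" "h \<in> inv_lim_carrier H q" "h k = \<one>\<^bsub>H k\<^esub>" "j \<le> k"
  shows "h j = \<one>\<^bsub>H j\<^esub>"
proof -
  have "group (H j)" "group (H k)" using assms(1) by (simp_all add: is_tower_def)
  then show ?thesis
    using bond_thread[OF assms(2,4)] assms(3) hom_one[OF bond_hom[OF assms(1,4)]] by simp
qed

lemma thread_of_compatible_sequence:
  assumes tower: "is_tower G p"
    and x: "\<And>i. x i \<in> carrier (G (k + i))" "\<And>i. p (k + i) (x (Suc i)) = x i"
  shows "\<exists>g \<in> inv_lim_carrier G p. g k = x 0"
proof -
  have x_bond: "bond p (k + i) (k + j) (x j) = x i" if "i \<le> j" for i j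
    using that
  proof (induction j)
    case (Suc j)
    show ?case
    proof (cases "i = Suc j")
      case False
      then have "i \<le> j" using Suc.prems by simp
      then show ?thesis
        using Suc.IH bond_bond[of "k + i" "k + j" "k + Suc j" p "x (Suc j)"] x(2)[of j] by simp
    qed simp
  qed simp
  define g where "g j = bond p j (k + j) (x j)" for j
  have "g \<in> inv_lim_carrier G p"
    unfolding inv_lim_carrier_def
  proof (intro CollectI conjI allI)
    fix j
    show "g j \<in> carrier (G j)"
      unfolding g_def using bond_closed[OF tower _ x(1)] by simp
    have "p j (g (Suc j)) = bond p j (k + Suc j) (x (Suc j))"
      unfolding g_def using bond_bond[of j "Suc j" "k + Suc j" p] by simp
    also have "\<dots> = bond p j (k + j) (bond p (k + j) (k + Suc j) (x (Suc j)))"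
      using bond_bond[of j "k + j" "k + Suc j" p "x (Suc j)"] by simp
    also have "\<dots> = g j"
      unfolding g_def using x_bond[of j "Suc j"] by simp
    finally show "p j (g (Suc j)) = g j" .
  qed
  moreover have "g k = x 0"
    unfolding g_def using x_bond[of 0 k] by simp
  ultimately show ?thesis by blast
qed

lemma thread_through_surjective_subsystem:
  assumes tower: "is_tower G p"
    and S: "\<And>n. S n \<subseteq> carrier (G n)" "\<And>n z. z \<in> S n \<Longrightarrow> \<exists>w \<in> S (Suc n). p n w = z"
    and y: "y \<in> S k"
  shows "\<exists>g \<in> inv_lim_carrier G p. g k = y"
proof -
  have "\<exists>x. \<forall>i. (x i \<in> S (k + i) \<and> (i = 0 \<longrightarrow> x i = y)) \<and> p (k + i) (x (Suc i)) = x i"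
  proof (rule dependent_nat_choice)
    show "\<exists>z. z \<in> S (k + 0) \<and> (0 = 0 \<longrightarrow> z = y)"
      using y by simp
    fix z i
    assume "z \<in> S (k + i) \<and> (i = 0 \<longrightarrow> z = y)"
    then obtain w where "w \<in> S (Suc (k + i))" "p (k + i) w = z"
      using S(2) by blast
    then show "\<exists>w. (w \<in> S (k + Suc i) \<and> (Suc i = 0 \<longrightarrow> w = y)) \<and> p (k + i) w = z"
      by auto
  qed
  then obtain x where x: "\<And>i. x i \<in> S (k + i)" "x 0 = y" "\<And>i. p (k + i) (x (Suc i)) = x i"
    by blast
  show ?thesis
    using thread_of_compatible_sequence[OF tower, of x k] x S(1) by blast
qed

text \<open>The stable images form a subsystem whose bonding maps are onto.\<close>
lemma mittag_leffler_lift: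
  assumes tower: "is_tower G p" and ml: "mittag_leffler G p"
  shows "\<exists>k' \<ge> k. \<forall>y \<in> bond p k k' ` carrier (G k'). \<exists>g \<in> inv_lim_carrier G p. g k = y"
proof -
  obtain s where s: "\<And>n. s n > n \<and>
      (\<forall>m > s n. bond p n m ` carrier (G m) = bond p n (s n) ` carrier (G (s n)))"
    using choice[OF ml[unfolded mittag_leffler_def]] by blast
  define S where "S n = bond p n (s n) ` carrier (G (s n))" for n
  have stable: "bond p n m ` carrier (G m) = S n" if "m \<ge> s n" for n m
  proof (cases "m = s n")
    case False
    then show ?thesis using s[of n] that unfolding S_def by simp
  qed (simp add: S_def)
  have S_carrier: "S n \<subseteq> carrier (G n)" for n
    unfolding S_def using bond_closed[OF tower] s[of n] by (simp add: image_subset_iff)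
  have S_onto: "\<exists>w \<in> S (Suc n). p n w = z" if "z \<in> S n" for n z
  proof -
    define m where "m = s n + s (Suc n)"
    have "n < m" "s n \<le> m" "s (Suc n) \<le> m"
      unfolding m_def using s[of n] by auto
    then have "z \<in> bond p n m ` carrier (G m)"
      using stable[of n m] that by simp
    then obtain x where x: "x \<in> carrier (G m)" "z = bond p n m x"
      by blast
    have "z = p n (bond p (Suc n) m x)"
      using x(2) bond_bond[of n "Suc n" m p x] \<open>n < m\<close> by simp
    moreover have "bond p (Suc n) m x \<in> S (Suc n)"
      using stable[OF \<open>s (Suc n) \<le> m\<close>] x(1) by blast
    ultimately show ?thesis by blast
  qed
  have "\<exists>g \<in> inv_lim_carrier G p. g k = y" if "y \<in> bond p k (s k) ` carrier (G (s k))" for y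
    using thread_through_surjective_subsystem[OF tower S_carrier S_onto] that
    unfolding S_def by blast
  moreover have "k \<le> s k"
    using s[of k] by simp
  ultimately show ?thesis by blast
qed

lemma inv_lim_carrier_subset_topspace:
  "inv_lim_carrier G p \<subseteq> topspace (product_topology (\<lambda>n. discrete_topology (carrier (G n))) UNIV)"
  by (auto simp: inv_lim_carrier_def)

lemma openin_inv_lim_coordinate:
  assumes "c \<in> carrier (G n)"
  shows "openin (inv_lim_topology G p) {g \<in> inv_lim_carrier G p. g n = c}"
proof -
  let ?P = "product_topology (\<lambda>n. discrete_topology (carrier (G n))) UNIV"
  have "openin ?P {g \<in> topspace ?P. g n \<in> {c}}"
    by (rule openin_continuous_map_preimage[OF continuous_map_product_projection])
      (simp_all add: assms)
  moreover have "{g \<in> inv_lim_carrier G p. g n = c} = {g \<in> topspace ?P. g n \<in> {c}} \<inter> inv_lim_carrier G p"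
    using inv_lim_carrier_subset_topspace by blast
  ultimately show ?thesis
    unfolding inv_lim_topology_def openin_subtopology by blast
qed

lemma openin_inv_lim_initial_segment:
  assumes "openin (inv_lim_topology H q) N" "e \<in> N"
  shows "\<exists>m. \<forall>h \<in> inv_lim_carrier H q. (\<forall>j \<le> m. h j = e j) \<longrightarrow> h \<in> N"
proof -
  obtain W where W: "openin (product_topology (\<lambda>n. discrete_topology (carrier (H n))) UNIV) W"
    and N: "N = W \<inter> inv_lim_carrier H q"
    using assms(1) unfolding inv_lim_topology_def openin_subtopology by blast
  have "e \<in> W" using assms(2) N by simp
  then obtain V where V: "finite {j \<in> UNIV. V j \<noteq> carrier (H j)}" "e \<in> Pi\<^sub>E UNIV V" "Pi\<^sub>E UNIV V \<subseteq> W"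
    using W unfolding openin_product_topology_alt topspace_discrete_topology by blast
  then obtain m where m: "\<And>j. V j \<noteq> carrier (H j) \<Longrightarrow> j \<le> m"
    using finite_nat_set_iff_bounded_le[of "{j \<in> UNIV. V j \<noteq> carrier (H j)}"] by auto
  have "h \<in> N" if h: "h \<in> inv_lim_carrier H q" "\<forall>j \<le> m. h j = e j" for h
  proof -
    have "h j \<in> V j" for j
    proof (cases "j \<le> m")
      case True
      then show ?thesis using h(2) V(2) by (simp add: PiE_iff)
    next
      case False
      then show ?thesis using h(1) m[of j] by (auto simp: inv_lim_carrier_def)
    qed
    then have "h \<in> W"
      using V(3) by (auto simp: PiE_iff)
    then show ?thesis
      using N h(1) by simp
  qed
  then show ?thesis by blast
qed

lemma open_injective_induced_map_kernel:
  assumes tG: "is_tower G p" and tH: "is_tower H q"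
    and lm: "level_morphism G p H q f"
    and inj: "inj_on (induced_map f) (inv_lim_carrier G p)"
    and open_F: "open_map (inv_lim_topology G p) (inv_lim_topology H q) (induced_map f)"
  shows "\<exists>k \<ge> n. \<forall>g \<in> inv_lim_carrier G p. f k (g k) = \<one>\<^bsub>H k\<^esub> \<longrightarrow> g n = \<one>\<^bsub>G n\<^esub>"
proof -
  let ?F = "induced_map f"
  define U where "U = {g \<in> inv_lim_carrier G p. g n = \<one>\<^bsub>G n\<^esub>}"
  have "group (G n)"
    using tG by (simp add: is_tower_def)
  then have "openin (inv_lim_topology G p) U"
    unfolding U_def by (intro openin_inv_lim_coordinate monoid.one_closed group.is_monoid)
  then have FU_open: "openin (inv_lim_topology H q) (?F ` U)"
    using open_F unfolding open_map_def by blast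
  have "?F (\<lambda>j. \<one>\<^bsub>G j\<^esub>) = (\<lambda>j. \<one>\<^bsub>H j\<^esub>)"
    using induced_map_one[OF tG tH lm] .
  moreover have "(\<lambda>j. \<one>\<^bsub>G j\<^esub>) \<in> U"
    unfolding U_def using one_in_inv_lim_carrier[OF tG] by simp
  ultimately have "(\<lambda>j. \<one>\<^bsub>H j\<^esub>) \<in> ?F ` U"
    by (metis imageI)
  then obtain m where m: "\<forall>h \<in> inv_lim_carrier H q. (\<forall>j \<le> m. h j = \<one>\<^bsub>H j\<^esub>) \<longrightarrow> h \<in> ?F ` U"
    using openin_inv_lim_initial_segment[OF FU_open] by blast
  have "g n = \<one>\<^bsub>G n\<^esub>"
    if g: "g \<in> inv_lim_carrier G p" "f (max n m) (g (max n m)) = \<one>\<^bsub>H (max n m)\<^esub>" for g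
  proof -
    have Fg: "?F g \<in> inv_lim_carrier H q"
      using induced_map_thread[OF lm g(1)] .
    moreover have "?F g (max n m) = \<one>\<^bsub>H (max n m)\<^esub>"
      using g(2) by (simp add: induced_map_def)
    ultimately have "\<forall>j \<le> m. ?F g j = \<one>\<^bsub>H j\<^esub>"
      using thread_one_below[OF tH Fg] by simp
    then have "?F g \<in> ?F ` U"
      using m Fg by blast
    then obtain g' where "g' \<in> U" "?F g = ?F g'"
      by blast
    then have "g = g'"
      using inj g(1) unfolding U_def by (simp add: inj_on_eq_iff)
    then show ?thesis
      using \<open>g' \<in> U\<close> unfolding U_def by simp
  qed
  then show ?thesis
    by (intro exI[of _ "max n m"]) simp
qed

lemma bond_agreement_eventually:
  assumes tower: "is_tower A r" and "i \<le> m" "j \<le> m"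
    and agree: "\<forall>x \<in> carrier (A m). \<phi> (bond r i m x) = \<psi> (bond r j m x)"
  shows "\<forall>\<^sub>F m' in sequentially. \<forall>x \<in> carrier (A m'). \<phi> (bond r i m' x) = \<psi> (bond r j m' x)"
proof (rule eventually_sequentiallyI[of m], intro ballI)
  fix m' x assume "m \<le> m'" "x \<in> carrier (A m')"
  then have "\<phi> (bond r i m (bond r m m' x)) = \<psi> (bond r j m (bond r m m' x))"
    using agree bond_closed[OF tower] by blast
  then show "\<phi> (bond r i m' x) = \<psi> (bond r j m' x)"
    using bond_bond[of i m m' r x] bond_bond[of j m m' r x] \<open>i \<le> m\<close> \<open>j \<le> m\<close> \<open>m \<le> m'\<close>
    by simp
qed

lemma tower_morph_eventually:
  assumes tower: "is_tower A r" and a: "tower_morph A r G p a \<alpha>" and "n \<le> n'"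
  shows "\<forall>\<^sub>F m in sequentially. \<forall>x \<in> carrier (A m).
           a n (bond r (\<alpha> n) m x) = bond p n n' (a n' (bond r (\<alpha> n') m x))"
proof (cases "n = n'")
  case False
  then have "n < n'" using \<open>n \<le> n'\<close> by simp
  then obtain m where "\<alpha> n \<le> m" "\<alpha> n' \<le> m"
      "\<forall>x \<in> carrier (A m). a n (bond r (\<alpha> n) m x) = bond p n n' (a n' (bond r (\<alpha> n') m x))"
    using a unfolding tower_morph_def by blast
  then show ?thesis
    by (rule bond_agreement_eventually[OF tower, where \<psi> = "\<lambda>y. bond p n n' (a n' y)"])
qed simp

lemma tower_eq_eventually:
  assumes tower: "is_tower A r" and "tower_eq A r f \<Phi> g \<Psi>"
  shows "\<forall>\<^sub>F m in sequentially. \<forall>x \<in> carrier (A m). f n (bond r (\<Phi> n) m x) = g n (bond r (\<Psi> n) m x)"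
proof -
  obtain m where "\<Phi> n \<le> m" "\<Psi> n \<le> m"
      "\<forall>x \<in> carrier (A m). f n (bond r (\<Phi> n) m x) = g n (bond r (\<Psi> n) m x)"
    using assms(2) unfolding tower_eq_def by blast
  then show ?thesis
    by (rule bond_agreement_eventually[OF tower])
qed

lemma tower_eqI:
  assumes "\<And>n. \<forall>\<^sub>F m in sequentially. \<forall>x \<in> carrier (A m). f n (bond r (\<Phi> n) m x) = g n (bond r (\<Psi> n) m x)"
  shows "tower_eq A r f \<Phi> g \<Psi>"
  unfolding tower_eq_def
proof
  fix n
  have "\<forall>\<^sub>F m in sequentially. \<Phi> n \<le> m \<and> \<Psi> n \<le> m \<and>
          (\<forall>x \<in> carrier (A m). f n (bond r (\<Phi> n) m x) = g n (bond r (\<Psi> n) m x))"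
    using assms[of n] eventually_ge_at_top[of "\<Phi> n"] eventually_ge_at_top[of "\<Psi> n"]
    by eventually_elim blast
  then obtain m where "\<Phi> n \<le> m \<and> \<Psi> n \<le> m \<and>
          (\<forall>x \<in> carrier (A m). f n (bond r (\<Phi> n) m x) = g n (bond r (\<Psi> n) m x))"
    unfolding eventually_sequentially by blast
  then show "\<exists>m. \<Phi> n \<le> m \<and> \<Psi> n \<le> m \<and>
          (\<forall>x \<in> carrier (A m). f n (bond r (\<Phi> n) m x) = g n (bond r (\<Psi> n) m x))"
    by blast
qed

lemma bond_eq_if_images_eq:
  assumes tower: "is_tower G p" and f: "f \<in> hom (G k) K" "group K"
    and "n \<le> k" "k \<le> k'"
    and kernel: "\<forall>g \<in> inv_lim_carrier G p. f (g k) = \<one>\<^bsub>K\<^esub> \<longrightarrow> g n = \<one>\<^bsub>G n\<^esub>"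
    and lift: "\<forall>y \<in> bond p k k' ` carrier (G k'). \<exists>g \<in> inv_lim_carrier G p. g k = y"
    and uv: "u \<in> carrier (G k')" "v \<in> carrier (G k')"
    and eq: "f (bond p k k' u) = f (bond p k k' v)"
  shows "bond p n k' u = bond p n k' v"
proof -
  have group: "group (G i)" for i using tower by (simp add: is_tower_def)
  interpret Gn: group "G n" by (rule group)
  interpret Pk: group_hom "G k'" "G k" "bond p k k'"
    using group bond_hom[OF tower \<open>k \<le> k'\<close>] by (simp add: group_hom_def group_hom_axioms_def)
  interpret Pn: group_hom "G k'" "G n" "bond p n k'"
    using group bond_hom[OF tower, of n k'] assms(4,5) by (simp add: group_hom_def group_hom_axioms_def)
  interpret F: group_hom "G k" K f
    using group f by (simp add: group_hom_def group_hom_axioms_def)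
  define d where "d = inv\<^bsub>G k'\<^esub> u \<otimes>\<^bsub>G k'\<^esub> v"
  have d: "d \<in> carrier (G k')"
    unfolding d_def using uv by simp
  obtain g where g: "g \<in> inv_lim_carrier G p" "g k = bond p k k' d"
    using lift d by blast
  have "f (g k) = inv\<^bsub>K\<^esub> f (bond p k k' u) \<otimes>\<^bsub>K\<^esub> f (bond p k k' v)"
    unfolding g(2) d_def using uv by (simp add: Pk.hom_mult Pk.hom_inv F.hom_mult F.hom_inv)
  also have "\<dots> = \<one>\<^bsub>K\<^esub>"
    using eq uv F.H.l_inv by simp
  finally have "\<one>\<^bsub>G n\<^esub> = bond p n k (g k)"
    using kernel bond_thread[OF g(1) \<open>n \<le> k\<close>] g(1) by simp
  also have "\<dots> = bond p n k' d"
    using g(2) bond_bond[of n k k' p d] assms(4,5) by simp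
  also have "\<dots> = inv\<^bsub>G n\<^esub> bond p n k' u \<otimes>\<^bsub>G n\<^esub> bond p n k' v"
    unfolding d_def using uv by (simp add: Pn.hom_mult Pn.hom_inv)
  finally have "bond p n k' v = bond p n k' u \<otimes>\<^bsub>G n\<^esub> \<one>\<^bsub>G n\<^esub>"
    using Gn.inv_solve_left'[OF Gn.one_closed Pn.hom_closed[OF uv(1)] Pn.hom_closed[OF uv(2)]]
    by simp
  then show ?thesis
    using Pn.hom_closed[OF uv(1)] by simp
qed

lemma tower_morphs_agree_below:
  assumes tA: "is_tower A r" and tG: "is_tower G p"
    and a: "tower_morph A r G p a \<alpha>" and b: "tower_morph A r G p b \<beta>"
    and f: "f \<in> hom (G k) K" "group K" and "n \<le> k" "k \<le> k'"
    and kernel: "\<forall>g \<in> inv_lim_carrier G p. f (g k) = \<one>\<^bsub>K\<^esub> \<longrightarrow> g n = \<one>\<^bsub>G n\<^esub>"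
    and lift: "\<forall>y \<in> bond p k k' ` carrier (G k'). \<exists>g \<in> inv_lim_carrier G p. g k = y"
    and fab: "\<forall>\<^sub>F m in sequentially. \<forall>x \<in> carrier (A m).
                f (a k (bond r (\<alpha> k) m x)) = f (b k (bond r (\<beta> k) m x))"
  shows "\<forall>\<^sub>F m in sequentially. \<forall>x \<in> carrier (A m). a n (bond r (\<alpha> n) m x) = b n (bond r (\<beta> n) m x)"
proof -
  have "n \<le> k'" using \<open>n \<le> k\<close> \<open>k \<le> k'\<close> by simp
  have a_hom: "a k' \<in> hom (A (\<alpha> k')) (G k')" and b_hom: "b k' \<in> hom (A (\<beta> k')) (G k')"
    using a b by (simp_all add: tower_morph_def)
  from tower_morph_eventually[OF tA a \<open>n \<le> k'\<close>] tower_morph_eventually[OF tA a \<open>k \<le> k'\<close>]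
    tower_morph_eventually[OF tA b \<open>n \<le> k'\<close>] tower_morph_eventually[OF tA b \<open>k \<le> k'\<close>] fab
    eventually_ge_at_top[of "\<alpha> k'"] eventually_ge_at_top[of "\<beta> k'"]
  show ?thesis
  proof eventually_elim
    case (elim m)
    show ?case
    proof
      fix x assume x: "x \<in> carrier (A m)"
      define u where "u = a k' (bond r (\<alpha> k') m x)"
      define v where "v = b k' (bond r (\<beta> k') m x)"
      have uv: "u \<in> carrier (G k')" "v \<in> carrier (G k')"
        unfolding u_def v_def
        using hom_in_carrier[OF a_hom] hom_in_carrier[OF b_hom] bond_closed[OF tA _ x] elim(6,7)
        by simp_all
      have "f (bond p k k' u) = f (bond p k k' v)"
        using elim(2,4,5) x unfolding u_def v_def by simp
      then have "bond p n k' u = bond p n k' v"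
        by (rule bond_eq_if_images_eq[OF tG f \<open>n \<le> k\<close> \<open>k \<le> k'\<close> kernel lift uv])
      then show "a n (bond r (\<alpha> n) m x) = b n (bond r (\<beta> n) m x)"
        using elim(1,3) x unfolding u_def v_def by simp
    qed
  qed
qed

theorem proposition8p13:
  fixes G :: "nat \<Rightarrow> ('a, 'm) monoid_scheme" and p :: "nat \<Rightarrow> 'a \<Rightarrow> 'a"
    and H :: "nat \<Rightarrow> ('b, 'n) monoid_scheme" and q :: "nat \<Rightarrow> 'b \<Rightarrow> 'b"
    and f :: "nat \<Rightarrow> 'a \<Rightarrow> 'b"
  assumes "is_tower G p" and "is_tower H q"
    and "level_morphism G p H q f"
    and "induced_map f \<in> iso (inv_lim G p) (inv_lim H q)"
    and "open_map (inv_lim_topology G p) (inv_lim_topology H q) (induced_map f)"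
    and "mittag_leffler G p"
  shows "tower_mono TYPE('c) G p H q f id"
  unfolding tower_mono_def
proof (intro allI impI tower_eqI)
  fix A :: "nat \<Rightarrow> 'c monoid" and r a \<alpha> b \<beta> n
  assume tA: "is_tower A r" and a: "tower_morph A r G p a \<alpha>" and b: "tower_morph A r G p b \<beta>"
    and fab: "tower_eq A r (tower_comp_maps f id a) (tower_comp_index id \<alpha>)
                           (tower_comp_maps f id b) (tower_comp_index id \<beta>)"
  have "inj_on (induced_map f) (inv_lim_carrier G p)"
    using assms(4) by (simp add: iso_iff inv_lim_def)
  then obtain k where k: "n \<le> k"
      "\<forall>g \<in> inv_lim_carrier G p. f k (g k) = \<one>\<^bsub>H k\<^esub> \<longrightarrow> g n = \<one>\<^bsub>G n\<^esub>"
    using open_injective_induced_map_kernel[OF assms(1-3) _ assms(5)] by blast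
  obtain k' where k': "k \<le> k'"
      "\<forall>y \<in> bond p k k' ` carrier (G k'). \<exists>g \<in> inv_lim_carrier G p. g k = y"
    using mittag_leffler_lift[OF assms(1,6)] by blast
  have "f k \<in> hom (G k) (H k)" "group (H k)"
    using assms(2,3) by (simp_all add: level_morphism_def is_tower_def)
  moreover have "\<forall>\<^sub>F m in sequentially. \<forall>x \<in> carrier (A m).
      f k (a k (bond r (\<alpha> k) m x)) = f k (b k (bond r (\<beta> k) m x))"
    using tower_eq_eventually[OF tA fab, of k] by (simp add: tower_comp_maps_def tower_comp_index_def)
  ultimately show "\<forall>\<^sub>F m in sequentially. \<forall>x \<in> carrier (A m).
      a n (bond r (\<alpha> n) m x) = b n (bond r (\<beta> n) m x)"
    using tower_morphs_agree_below[OF tA assms(1) a b _ _ k(1) k'(1) _ k'(2)] k(2) by blast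
qed

end
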